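(* Let $T$ be a heterogeneous finger search tree and consider splitting $T$, by a sequence of split operations, into $k$ smaller trees $t_1,\dots,t_k$. Then the work required to split $T$ is $O\left(\sum_{i=1}^k\lg(|t_i|+1)\right)$, regardless of the order in which the splits are performed.
   Context: For a heterogeneous finger search tree $T$ (a BST variant) and a key $k$, $\mathrm{split}(T,k)$ returns two trees, one with the keys of $T$ less than $k$ and one with the keys greater than $k$, at amortized cost $O(\lg(\min(|T_1|,|T_2|)+1))$, where $T_1,T_2$ are the two returned trees. Keys are distinct, and the trees $t_1,\dots,t_k$ partition the keys of $T$ into contiguous key ranges. *)

theory Defs
  imports Complex_Main
begin

text \<open>A tree is represented by its
  (finite) key set.  The state is the ordered list of current trees (contiguous key ranges).\<close>

inductive splits :: "('a::linorder set \<Rightarrow> 'a set \<Rightarrow> real) \<Rightarrow> 'a set list \<Rightarrow> 'a set list \<Rightarrow> real \<Rightarrow> bool"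
  for w where
  stop: "splits w ts ts 0"
| step: "\<lbrakk> j < length ts; k \<notin> ts ! j;
          splits w (take j ts @ [{x \<in> ts ! j. x < k}, {x \<in> ts ! j. k < x}] @ drop (Suc j) ts) us W \<rbrakk>
         \<Longrightarrow> splits w ts us (w {x \<in> ts ! j. x < k} {x \<in> ts ! j. k < x} + W)"

end

theory Submission
  imports Defs
begin

text \<open>Take the potential \<open>\<Phi>\<close> of a list of trees to be \<open>\<Sum> lg (|t| + 1)\<close>. Splitting a tree of
  size \<open>a + b\<close> into trees of sizes \<open>a \<le> b\<close> raises \<open>\<Phi>\<close> by at least \<open>lg (a + 1) / 3\<close>, because
  \<open>(a + b + 1)\<^sup>3 \<le> (a + 1)\<^sup>2 (b + 1)\<^sup>3\<close> for natural numbers. Hence the total work of any sequence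
  of splits is at most \<open>3c\<close> times the final potential.\<close>

lemma cube_add_le:
  fixes a b :: nat
  assumes "a \<le> b"
  shows "(a + b + 1)^3 \<le> (a + 1)^2 * (b + 1)^3"
proof -
  have lin: "(a + b + 1) * (a + 1) \<le> (b + 1) * (2 * a + 1)"
  proof -
    have "a * a \<le> a * b" using assms by simp
    thus ?thesis by (simp add: algebra_simps)
  qed
  \<comment> \<open>false for the real number \<open>a = 1/2\<close>: this is where integrality enters\<close>
  have small: "(2 * a + 1)^3 \<le> (a + 1)^5"
  proof (cases "a \<le> 1")
    case True
    then consider "a = 0" | "a = 1" by linarith
    then show ?thesis by cases (simp_all add: numeral_eq_Suc)
  next
    case False
    have "(3::nat)^2 \<le> (a + 1)^2" using False by (intro power_mono) simp_all
    then have eight: "8 \<le> (a + 1)^2" by simp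
    have "(2 * a + 1)^3 \<le> (2 * (a + 1))^3" by (intro power_mono) auto
    also have "\<dots> = 8 * (a + 1)^3" by (simp only: power_mult_distrib) simp
    also have "\<dots> \<le> (a + 1)^2 * (a + 1)^3" using eight by (rule mult_right_mono) simp
    also have "\<dots> = (a + 1)^5" by (simp flip: power_add)
    finally show ?thesis .
  qed
  have "(a + b + 1)^3 * (a + 1)^3 \<le> (b + 1)^3 * (2 * a + 1)^3"
    using power_mono[OF lin, of 3] by (simp only: power_mult_distrib)
  also have "\<dots> \<le> (b + 1)^3 * (a + 1)^5" using small by simp
  also have "\<dots> = ((a + 1)^2 * (b + 1)^3) * (a + 1)^3" by (simp flip: power_add add: mult_ac)
  finally show ?thesis by simp
qed

lemma log_min_le_split_gain:
  fixes a b :: nat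
  shows "log 2 (real (min a b) + 1)
           \<le> 3 * (log 2 (real a + 1) + log 2 (real b + 1) - log 2 (real (a + b) + 1))"
proof -
  have le: "log 2 (real a + 1) \<le> 3 * (log 2 (real a + 1) + log 2 (real b + 1) - log 2 (real (a + b) + 1))"
    if "a \<le> b" for a b :: nat
  proof -
    have "real ((a + b + 1)^3) \<le> real ((a + 1)^2 * (b + 1)^3)"
      using cube_add_le[OF that] by (simp only: of_nat_le_iff)
    then have "(real a + real b + 1)^3 \<le> (real a + 1)^2 * (real b + 1)^3"
      by (simp add: add_ac)
    then have "log 2 ((real a + real b + 1)^3) \<le> log 2 ((real a + 1)^2 * (real b + 1)^3)"
      by (subst log_le_cancel_iff) auto
    then show ?thesis by (simp add: log_mult log_nat_power)
  qed
  show ?thesis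
  proof (cases "a \<le> b")
    case True
    then show ?thesis using le[of a b] by simp
  next
    case False
    then show ?thesis using le[of b a] by (simp add: add.commute)
  qed
qed

lemma card_split_at:
  fixes T :: "'a::linorder set"
  assumes "finite T" "k \<notin> T"
  shows "card {x \<in> T. x < k} + card {x \<in> T. k < x} = card T"
proof -
  have "T = {x \<in> T. x < k} \<union> {x \<in> T. k < x}"
    using assms(2) by (auto simp: not_less order.order_iff_strict)
  then have "card T = card ({x \<in> T. x < k} \<union> {x \<in> T. k < x})"
    by (rule arg_cong)
  also have "\<dots> = card {x \<in> T. x < k} + card {x \<in> T. k < x}"
    using assms(1) by (intro card_Un_disjoint) auto
  finally show ?thesis by simp
qed

lemma sum_list_map_replace_nth:
  fixes f :: "'a \<Rightarrow> 'b::ab_group_add"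
  assumes "j < length xs"
  shows "sum_list (map f (take j xs @ ys @ drop (Suc j) xs))
           = sum_list (map f xs) - f (xs ! j) + sum_list (map f ys)"
proof -
  have xs: "xs = take j xs @ [xs ! j] @ drop (Suc j) xs"
    using assms by (simp add: id_take_nth_drop)
  have "sum_list (map f xs)
          = sum_list (map f (take j xs)) + f (xs ! j) + sum_list (map f (drop (Suc j) xs))"
    by (subst xs) (simp add: add.assoc)
  then show ?thesis by simp
qed

definition potential :: "'a set list \<Rightarrow> real" where
  "potential ts = (\<Sum>t\<leftarrow>ts. log 2 (real (card t) + 1))"

lemma potential_nonneg: "potential ts \<ge> 0"
  unfolding potential_def by (intro sum_list_nonneg) auto

lemma splits_cost_le_potential_gain:
  fixes c :: real
  assumes "splits w ts us W" "\<forall>t\<in>set ts. finite t" "c \<ge> 0"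
    and w: "\<forall>A B. finite A \<longrightarrow> finite B \<longrightarrow> w A B \<le> c * log 2 (real (min (card A) (card B)) + 1)"
  shows "W \<le> 3 * c * (potential us - potential ts)"
  using assms(1,2)
proof (induction rule: splits.induct)
  case (stop ts)
  then show ?case by simp
next
  case (step j ts k us W)
  define A where "A = {x \<in> ts ! j. x < k}"
  define B where "B = {x \<in> ts ! j. k < x}"
  let ?ts' = "take j ts @ [A, B] @ drop (Suc j) ts"
  have fin: "finite (ts ! j)" using step.hyps(1) step.prems by simp
  then have finAB: "finite A" "finite B" by (simp_all add: A_def B_def)
  have "\<forall>t\<in>set ?ts'. finite t"
    using step.prems finAB by (auto dest: in_set_takeD in_set_dropD)
  then have IH: "W \<le> 3 * c * (potential us - potential ?ts')"
    using step.IH unfolding A_def B_def by blast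
  have gain: "potential ?ts' - potential ts
                = log 2 (real (card A) + 1) + log 2 (real (card B) + 1)
                  - log 2 (real (card A + card B) + 1)"
  proof -
    have "card (ts ! j) = card A + card B"
      using card_split_at[OF fin step.hyps(2)] by (simp add: A_def B_def)
    then show ?thesis
      using sum_list_map_replace_nth[OF step.hyps(1), where f = "\<lambda>t. log 2 (real (card t) + 1)"]
      by (simp add: potential_def)
  qed
  have "w A B \<le> c * log 2 (real (min (card A) (card B)) + 1)" using w finAB by blast
  also have "\<dots> \<le> 3 * c * (potential ?ts' - potential ts)"
    using mult_left_mono[OF log_min_le_split_gain[of "card A" "card B"] \<open>c \<ge> 0\<close>]
    unfolding gain by (simp add: algebra_simps)
  finally show ?case using IH unfolding A_def B_def by (simp add: algebra_simps)
qed

theorem lemma8: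
  fixes c :: real
  assumes "c \<ge> 0"
  shows "\<exists>C. \<forall>(w :: 'a::linorder set \<Rightarrow> 'a set \<Rightarrow> real) T ts W.
           (\<forall>A B. finite A \<longrightarrow> finite B \<longrightarrow> w A B \<le> c * log 2 (real (min (card A) (card B)) + 1))
           \<longrightarrow> finite T \<longrightarrow> splits w [T] ts W
           \<longrightarrow> W \<le> C * (\<Sum>t\<leftarrow>ts. log 2 (real (card t) + 1))"
proof (intro exI[of _ "3 * c"] allI impI)
  fix w :: "'a::linorder set \<Rightarrow> 'a set \<Rightarrow> real" and T ts W
  assume w: "\<forall>A B. finite A \<longrightarrow> finite B \<longrightarrow> w A B \<le> c * log 2 (real (min (card A) (card B)) + 1)"
    and "finite T" and "splits w [T] ts W"
  have "W \<le> 3 * c * (potential ts - potential [T])"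
    using splits_cost_le_potential_gain[OF \<open>splits w [T] ts W\<close> _ assms w] \<open>finite T\<close> by simp
  also have "\<dots> \<le> 3 * c * potential ts"
    using assms potential_nonneg[of "[T]"] by (intro mult_left_mono) simp_all
  finally show "W \<le> 3 * c * (\<Sum>t\<leftarrow>ts. log 2 (real (card t) + 1))"
    by (simp add: potential_def)
qed

end
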